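(* Let $n\ge2$, $k\ge2$, let $M$ be a smooth closed manifold, and let $\rho_0\in\mathrm{Hom}(\Gamma_{n,k},\mathrm{Diff}(M))$. Suppose $\rho_0$ has a global fixed point $p_0$ with $(D\rho_0^a)_{p_0}=k^{-1}I$ and $(D\rho_0^{b_i})_{p_0}=I$ for all $i=1,\dots,n$. Then there exist a neighborhood $\mathcal{U}$ of $\rho_0$ in $\mathrm{Hom}(\Gamma_{n,k},\mathrm{Diff}(M))$ and a continuous map $\hat p:\mathcal{U}\to M$ such that $\hat p(\rho_0)=p_0$ and $\hat p(\rho)$ is a global fixed point of $\rho$ for every $\rho\in\mathcal{U}$.
   Context: $\Gamma_{n,k} = \langle a, b_1,\dots,b_n \mid a b_i a^{-1} = b_i^k,\ b_i b_j = b_j b_i\rangle$. $\mathrm{Diff}(M)$ carries the $C^\infty$ topology and $\mathrm{Hom}(\Gamma_{n,k},\mathrm{Diff}(M))$ the induced product topology; $\rho^\gamma=\rho(\gamma)$. A global fixed point of $\rho$ is a point fixed by all $\rho^\gamma$. $I$ denotes the identity of $T_{p_0}M$. *)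

theory Defs
  imports "HOL-Analysis.Analysis"
begin

definition pd :: "'a::real_normed_vector \<Rightarrow> ('a \<Rightarrow> 'b::real_normed_vector) \<Rightarrow> 'a \<Rightarrow> 'b" where
  "pd v f x = vector_derivative (\<lambda>t::real. f (x + t *\<^sub>R v)) (at 0)"

fun dpart :: "'a::real_normed_vector list \<Rightarrow> ('a \<Rightarrow> 'b::real_normed_vector) \<Rightarrow> 'a \<Rightarrow> 'b" where
  "dpart [] f = f"
| "dpart (v # vs) f = pd v (dpart vs f)"

definition smooth_on :: "'a::euclidean_space set \<Rightarrow> ('a \<Rightarrow> 'b::euclidean_space) \<Rightarrow> bool" where
  "smooth_on U f \<longleftrightarrow> open U \<and>
     (\<forall>vs. set vs \<subseteq> Basis \<longrightarrow>
        continuous_on U (dpart vs f) \<and>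
        (\<forall>v\<in>Basis. \<forall>x\<in>U. (\<lambda>t::real. dpart vs f (x + t *\<^sub>R v)) differentiable (at 0)))"

definition chart :: "'e::euclidean_space set \<Rightarrow> ('d::euclidean_space \<Rightarrow> 'e) \<Rightarrow> 'd set \<Rightarrow> bool" where
  "chart M \<phi> V \<longleftrightarrow> open V \<and> smooth_on V \<phi> \<and> \<phi> ` V \<subseteq> M \<and>
     openin (top_of_set M) (\<phi> ` V) \<and> (\<exists>\<psi>. homeomorphism V (\<phi> ` V) \<phi> \<psi>) \<and>
     (\<forall>u\<in>V. inj (frechet_derivative \<phi> (at u)))"

definition submanifold :: "'d::euclidean_space itself \<Rightarrow> 'e::euclidean_space set \<Rightarrow> bool" where
  "submanifold (_::'d itself) M \<longleftrightarrow> (\<forall>p\<in>M. \<exists>(\<phi>::'d \<Rightarrow> 'e) V. chart M \<phi> V \<and> p \<in> \<phi> ` V)"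

definition closed_manifold :: "'d::euclidean_space itself \<Rightarrow> 'e::euclidean_space set \<Rightarrow> bool" where
  "closed_manifold D M \<longleftrightarrow> submanifold D M \<and> compact M"

text \<open>Maps M to M are represented by functions on the ambient space that are the identity
  off M, so that every map of M has exactly one representative.\<close>
definition smooth_self_map :: "'d::euclidean_space itself \<Rightarrow> 'e::euclidean_space set \<Rightarrow> ('e \<Rightarrow> 'e) \<Rightarrow> bool" where
  "smooth_self_map (_::'d itself) M f \<longleftrightarrow> f ` M \<subseteq> M \<and>
     (\<forall>(\<phi>::'d \<Rightarrow> 'e) V. chart M \<phi> V \<longrightarrow> smooth_on V (f \<circ> \<phi>))"

definition Diff :: "'d::euclidean_space itself \<Rightarrow> 'e::euclidean_space set \<Rightarrow> ('e \<Rightarrow> 'e) set" where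
  "Diff D M = {f. (\<forall>x. x \<notin> M \<longrightarrow> f x = x) \<and> bij_betw f M M \<and>
                  smooth_self_map D M f \<and> smooth_self_map D M (inv_into M f)}"

text \<open>The C-infinity topology on Diff(M) (weak = strong since M is compact), given by the
  subbasis of sets of maps whose iterated partial derivatives in a chart are uniformly
  epsilon-close on a compact subset of the chart domain.\<close>
definition Cinf_nbhd :: "'e::euclidean_space set \<Rightarrow> ('e \<Rightarrow> 'e) \<Rightarrow> ('d::euclidean_space \<Rightarrow> 'e) \<Rightarrow> 'd set
                         \<Rightarrow> 'd list \<Rightarrow> real \<Rightarrow> ('e \<Rightarrow> 'e) set" where
  "Cinf_nbhd M f \<phi> K vs \<epsilon> =
     {g. \<forall>u\<in>K. norm (dpart vs (g \<circ> \<phi>) u - dpart vs (f \<circ> \<phi>) u) < \<epsilon>}"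

definition Diff_top :: "'d::euclidean_space itself \<Rightarrow> 'e::euclidean_space set \<Rightarrow> ('e \<Rightarrow> 'e) topology" where
  "Diff_top D M = subtopology
     (topology_generated_by
        {Cinf_nbhd M f \<phi> K vs \<epsilon> | f (\<phi>::'d \<Rightarrow> 'e) V K vs \<epsilon>.
           f \<in> Diff D M \<and> chart M \<phi> V \<and> compact K \<and> K \<subseteq> V \<and> set vs \<subseteq> Basis \<and> \<epsilon> > 0})
     (Diff D M)"

text \<open>A homomorphism rho is encoded by the images of the generators:
  rho 0 = rho(a), rho i = rho(b_i) for 1 \<le> i \<le> n; the defining relations
  a b_i a^-1 = b_i^k (written a o b_i = b_i^k o a) and b_i b_j = b_j b_i must hold.\<close>
definition Hom_top :: "'d::euclidean_space itself \<Rightarrow> 'e::euclidean_space set \<Rightarrow> nat \<Rightarrow> nat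
                       \<Rightarrow> (nat \<Rightarrow> ('e \<Rightarrow> 'e)) topology" where
  "Hom_top D M n k = subtopology (product_topology (\<lambda>_. Diff_top D M) {0..n})
     {\<rho>. (\<forall>i\<in>{1..n}. \<rho> 0 \<circ> \<rho> i = (\<rho> i ^^ k) \<circ> \<rho> 0) \<and>
         (\<forall>i\<in>{1..n}. \<forall>j\<in>{1..n}. \<rho> i \<circ> \<rho> j = \<rho> j \<circ> \<rho> i)}"

text \<open>Global fixed point (it suffices to be fixed by the images of the generators).\<close>
definition global_fixed_point :: "nat \<Rightarrow> (nat \<Rightarrow> ('e \<Rightarrow> 'e)) \<Rightarrow> 'e \<Rightarrow> bool" where
  "global_fixed_point n \<rho> p \<longleftrightarrow> (\<forall>i\<in>{0..n}. \<rho> i p = p)"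

text \<open>(D f)_p = c I on T_p M, expressed in every local parametrization through p.\<close>
definition deriv_scalar_at :: "'d::euclidean_space itself \<Rightarrow> 'e::euclidean_space set \<Rightarrow> ('e \<Rightarrow> 'e) \<Rightarrow> 'e \<Rightarrow> real \<Rightarrow> bool" where
  "deriv_scalar_at (_::'d itself) M f p c \<longleftrightarrow>
     (\<forall>(\<phi>::'d \<Rightarrow> 'e) V u. chart M \<phi> V \<and> u \<in> V \<and> \<phi> u = p \<longrightarrow>
        frechet_derivative (f \<circ> \<phi>) (at u) = (\<lambda>h. c *\<^sub>R frechet_derivative \<phi> (at u) h))"

end

theory Submission
  imports Defs
begin

text \<open>In a chart around $p_0$ the generators of $\rho_0$ become maps that are $C^1$-close to the
  homotheties $u \mapsto u/k$ (for $a$) and $u \mapsto u$ (for the $b_i$), and this persists for all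
  $\rho$ in a $C^1$-neighbourhood of $\rho_0$. The chart representative of $\rho(a)$ is then a
  contraction of a small ball; its unique fixed point $x_\rho$ depends continuously on $\rho$. At
  $x_\rho$ the relation $a b_i = b_i^k a$ compares the displacement $b_i x_\rho - x_\rho$, contracted
  by the factor $k$ under $a$, with its $k$-fold accumulation along the orbit of $b_i$; as
  $k > 1/k$, this forces $b_i x_\rho = x_\rho$.\<close>

section \<open>Calculus of smooth maps in coordinates\<close>

lemma smooth_on_open: "smooth_on U f \<Longrightarrow> open U"
  unfolding smooth_on_def by blast

lemma smooth_on_imp_continuous_on: "smooth_on U f \<Longrightarrow> continuous_on U f"
  unfolding smooth_on_def by (metis dpart.simps(1) empty_subsetI empty_set)

lemma smooth_on_pd_continuous_on: "smooth_on U f \<Longrightarrow> v \<in> Basis \<Longrightarrow> continuous_on U (pd v f)"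
  unfolding smooth_on_def by (metis dpart.simps empty_set empty_subsetI insert_subset list.simps(15))

lemma smooth_on_has_vector_derivative_pd:
  assumes "smooth_on U f" "x \<in> U" "v \<in> Basis"
  shows "((\<lambda>t. f (x + t *\<^sub>R v)) has_vector_derivative pd v f x) (at 0)"
proof -
  have "(\<lambda>t::real. dpart [] f (x + t *\<^sub>R v)) differentiable (at 0)"
    using assms unfolding smooth_on_def by (metis empty_subsetI empty_set)
  then show ?thesis unfolding pd_def by (simp add: vector_derivative_works)
qed

lemma vector_derivative_near_constant_bound:
  fixes f :: "real \<Rightarrow> 'b::real_normed_vector"
  assumes der: "\<And>t. t \<in> closed_segment 0 a \<Longrightarrow> (f has_vector_derivative f' t) (at t)"
    and bd: "\<And>t. t \<in> closed_segment 0 a \<Longrightarrow> norm (f' t - D) \<le> e"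
  shows "norm (f a - f 0 - a *\<^sub>R D) \<le> \<bar>a\<bar> * e"
proof -
  define g where "g t = f t - t *\<^sub>R D" for t
  have "(g has_derivative (\<lambda>h. h *\<^sub>R (f' t - D))) (at t within closed_segment 0 a)"
    if "t \<in> closed_segment 0 a" for t
  proof -
    have "(g has_derivative (\<lambda>h. h *\<^sub>R f' t - h *\<^sub>R D)) (at t)"
      using der[OF that] unfolding g_def has_vector_derivative_def
      by (auto intro!: derivative_eq_intros)
    then show ?thesis by (simp add: has_derivative_at_withinI scaleR_diff_right)
  qed
  moreover have "onorm (\<lambda>h::real. h *\<^sub>R (f' t - D)) \<le> e" if "t \<in> closed_segment 0 a" for t
    using bd[OF that] by (intro onorm_le) (simp add: mult_left_mono mult.commute[of e])
  ultimately have "norm (g a - g 0) \<le> e * norm (a - 0)"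
    by (intro differentiable_bound[OF convex_closed_segment]) auto
  then show ?thesis by (simp add: g_def mult.commute diff_diff_eq add.commute)
qed

lemma has_vector_derivative_shift:
  fixes h :: "'a::real_normed_vector \<Rightarrow> 'b::real_normed_vector"
  assumes "((\<lambda>s. h ((w + t *\<^sub>R v) + s *\<^sub>R v)) has_vector_derivative P) (at 0)"
  shows "((\<lambda>s. h (w + s *\<^sub>R v)) has_vector_derivative P) (at t)"
proof -
  have "((\<lambda>s. h ((w + t *\<^sub>R v) + s *\<^sub>R v)) \<circ> (\<lambda>s. s - t) has_vector_derivative 1 *\<^sub>R P) (at t)"
    by (rule vector_diff_chain_at) (auto intro!: derivative_eq_intros simp: assms)
  moreover have "(\<lambda>s. h ((w + t *\<^sub>R v) + s *\<^sub>R v)) \<circ> (\<lambda>s. s - t) = (\<lambda>s. h (w + s *\<^sub>R v))"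
    by (auto simp: fun_eq_iff algebra_simps)
  ultimately show ?thesis by simp
qed

lemma segment_along_direction:
  fixes v :: "'a::real_vector"
  assumes "t \<in> closed_segment 0 a"
  shows "w + t *\<^sub>R v \<in> closed_segment w (w + a *\<^sub>R v)"
proof -
  from assms obtain u where "0 \<le> u" "u \<le> 1" "t = u * a" by (auto simp: in_segment)
  then show ?thesis by (auto simp: in_segment algebra_simps intro!: exI[of _ u])
qed

lemma inner_partial_coordinate_sum:
  fixes x y :: "'a::euclidean_space"
  assumes "S \<subseteq> Basis" "b \<in> Basis"
  shows "(y + (\<Sum>v\<in>S. ((x - y) \<bullet> v) *\<^sub>R v)) \<bullet> b = (if b \<in> S then x \<bullet> b else y \<bullet> b)"
proof -
  have "(\<Sum>v\<in>S. ((x - y) \<bullet> v) *\<^sub>R v) \<bullet> b = (\<Sum>v\<in>S. if v = b then (x - y) \<bullet> v else 0)"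
    unfolding inner_sum_left using assms by (intro sum.cong) (auto simp: inner_Basis)
  also have "\<dots> = (if b \<in> S then (x - y) \<bullet> b else 0)"
    using finite_subset[OF assms(1) finite_Basis] by (simp add: sum.delta')
  finally show ?thesis by (auto simp: inner_add_left inner_diff_left)
qed

text \<open>Going from $y$ to $x$ one coordinate at a time keeps every segment parallel to a
  basis vector and inside the box, so only partial derivatives are needed.\<close>
lemma box_partial_derivatives_bound:
  fixes h :: "'a::euclidean_space \<Rightarrow> 'b::real_normed_vector"
  assumes der: "\<And>w v. w \<in> cbox lo hi \<Longrightarrow> v \<in> Basis \<Longrightarrow>
                  ((\<lambda>t. h (w + t *\<^sub>R v)) has_vector_derivative P v w) (at 0)"
    and bd: "\<And>w v. w \<in> cbox lo hi \<Longrightarrow> v \<in> Basis \<Longrightarrow> norm (P v w - A v) \<le> e"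
    and x: "x \<in> cbox lo hi" and y: "y \<in> cbox lo hi"
  shows "norm (h x - h y - (\<Sum>v\<in>Basis. ((x - y) \<bullet> v) *\<^sub>R A v)) \<le> e * (\<Sum>v\<in>Basis. \<bar>(x - y) \<bullet> v\<bar>)"
proof -
  define z where "z S = y + (\<Sum>v\<in>S. ((x - y) \<bullet> v) *\<^sub>R v)" for S
  have z_box: "z S \<in> cbox lo hi" if "S \<subseteq> Basis" for S
    using x y that unfolding mem_box z_def by (auto simp: inner_partial_coordinate_sum[OF that])
  have "norm (h (z S) - h y - (\<Sum>v\<in>S. ((x - y) \<bullet> v) *\<^sub>R A v)) \<le> e * (\<Sum>v\<in>S. \<bar>(x - y) \<bullet> v\<bar>)"
    if "S \<subseteq> Basis" for S
    using finite_subset[OF that finite_Basis] that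
  proof (induction S rule: finite_subset_induct')
    case empty
    then show ?case by (simp add: z_def)
  next
    case (insert v S)
    define a where "a = (x - y) \<bullet> v"
    have S: "S \<subseteq> Basis" and v: "v \<in> Basis" using insert by auto
    have z_insert: "z (insert v S) = z S + a *\<^sub>R v"
      using insert by (simp add: z_def a_def algebra_simps)
    have seg: "z S + t *\<^sub>R v \<in> cbox lo hi" if "t \<in> closed_segment 0 a" for t
      using closed_segment_subset[OF z_box[OF S] z_box[of "insert v S"] convex_box(1)] S v
        segment_along_direction[OF that, of "z S" v] z_insert by auto
    have "norm (h (z S + a *\<^sub>R v) - h (z S + 0 *\<^sub>R v) - a *\<^sub>R A v) \<le> \<bar>a\<bar> * e"
      by (rule vector_derivative_near_constant_bound[where f'="\<lambda>t. P v (z S + t *\<^sub>R v)"])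
        (auto intro: has_vector_derivative_shift der[OF seg v] bd[OF seg v])
    then have "norm ((h (z (insert v S)) - h (z S) - a *\<^sub>R A v)
        + (h (z S) - h y - (\<Sum>v\<in>S. ((x - y) \<bullet> v) *\<^sub>R A v)))
        \<le> \<bar>a\<bar> * e + e * (\<Sum>v\<in>S. \<bar>(x - y) \<bullet> v\<bar>)"
      using insert.IH by (intro norm_triangle_le add_mono) (simp_all add: z_insert)
    then show ?case
      using insert.hyps by (simp add: a_def algebra_simps distrib_left)
  qed
  moreover have "z Basis = x" unfolding z_def euclidean_representation by simp
  ultimately show ?thesis by (metis order_refl)
qed

lemma sum_Basis_abs_inner_le: "(\<Sum>v\<in>Basis. \<bar>h \<bullet> v\<bar>) \<le> real DIM('a) * norm (h::'a::euclidean_space)"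
  using sum_mono[of Basis "\<lambda>v. \<bar>h \<bullet> v\<bar>" "\<lambda>_. norm h"] by (simp add: Basis_le_norm)

lemma continuous_on_eventually_near:
  fixes f :: "'a::metric_space \<Rightarrow> 'b::metric_space"
  assumes "continuous_on U f" "open U" "x \<in> U" "e > 0"
  shows "\<forall>\<^sub>F w in nhds x. w \<in> U \<and> dist (f w) (f x) < e"
proof -
  have "isCont f x" using assms(1-3) continuous_on_eq_continuous_at by blast
  then have "\<forall>\<^sub>F w in at x. dist (f w) (f x) < e" using assms(4) isCont_def tendstoD by blast
  then show ?thesis
    using assms(4) eventually_nhds_in_open[OF assms(2,3)]
    by (auto simp: eventually_nhds_conv_at intro: eventually_conj)
qed

lemma smooth_on_eventually_C1_near:
  assumes "smooth_on U h" "x \<in> U" "e > 0"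
  shows "\<forall>\<^sub>F w in nhds x. w \<in> U \<and> dist (h w) (h x) < e \<and> (\<forall>v\<in>Basis. dist (pd v h w) (pd v h x) < e)"
proof -
  have "\<forall>\<^sub>F w in nhds x. \<forall>v\<in>Basis. w \<in> U \<and> dist (pd v h w) (pd v h x) < e"
    using continuous_on_eventually_near[OF smooth_on_pd_continuous_on[OF assms(1)]
        smooth_on_open[OF assms(1)] assms(2,3)]
    by (intro eventually_ball_finite) auto
  moreover have "\<forall>\<^sub>F w in nhds x. w \<in> U \<and> dist (h w) (h x) < e"
    using assms by (intro continuous_on_eventually_near smooth_on_imp_continuous_on smooth_on_open)
  ultimately show ?thesis by eventually_elim auto
qed

lemma smooth_on_has_derivative:
  fixes h :: "'a::euclidean_space \<Rightarrow> 'b::euclidean_space"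
  assumes h: "smooth_on U h" and x: "x \<in> U"
  shows "(h has_derivative (\<lambda>y. \<Sum>v\<in>Basis. (y \<bullet> v) *\<^sub>R pd v h x)) (at x)"
  unfolding has_derivative_at_alt
proof (intro conjI allI impI)
  show "bounded_linear (\<lambda>y. \<Sum>v\<in>Basis. (y \<bullet> v) *\<^sub>R pd v h x)"
    by (intro bounded_linear_sum bounded_linear_scaleR_const bounded_linear_inner_left)
  fix e :: real assume "e > 0"
  then obtain d where "d > 0" and
    d: "\<And>w. dist w x < d \<Longrightarrow> w \<in> U \<and> (\<forall>v\<in>Basis. dist (pd v h w) (pd v h x) < e / real DIM('a))"
    using smooth_on_eventually_C1_near[OF h x, of "e / real DIM('a)"] by (auto simp: eventually_nhds_metric)
  show "\<exists>d>0. \<forall>y. norm (y - x) < d \<longrightarrow>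
          norm (h y - h x - (\<Sum>v\<in>Basis. ((y - x) \<bullet> v) *\<^sub>R pd v h x)) \<le> e * norm (y - x)"
  proof (intro exI[of _ "d / real DIM('a)"] conjI allI impI)
    show "d / real DIM('a) > 0" using \<open>d > 0\<close> by simp
    fix y assume y: "norm (y - x) < d / real DIM('a)"
    define r where "r = norm (y - x)"
    define B where "B = cbox (x - r *\<^sub>R \<Sum>Basis) (x + r *\<^sub>R \<Sum>Basis)"
    have mem_B: "w \<in> B \<longleftrightarrow> (\<forall>v\<in>Basis. \<bar>(w - x) \<bullet> v\<bar> \<le> r)" for w
      by (auto simp: B_def mem_box inner_sum_left inner_Basis inner_diff_left abs_le_iff algebra_simps)
    have "dist w x < d" if "w \<in> B" for w
    proof -
      have "norm (w - x) \<le> (\<Sum>v\<in>(Basis::'a set). r)"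
        using that norm_le_l1[of "w - x"] sum_mono[of Basis "\<lambda>v. \<bar>(w - x) \<bullet> v\<bar>" "\<lambda>_. r"]
        by (auto simp: mem_B)
      also have "\<dots> < d" using y by (simp add: r_def field_simps)
      finally show ?thesis by (simp add: dist_norm)
    qed
    moreover have "x \<in> B" "y \<in> B"
      using \<open>d > 0\<close> Basis_le_norm by (auto simp: mem_B r_def)
    ultimately have "norm (h y - h x - (\<Sum>v\<in>Basis. ((y - x) \<bullet> v) *\<^sub>R pd v h x))
        \<le> e / real DIM('a) * (\<Sum>v\<in>Basis. \<bar>(y - x) \<bullet> v\<bar>)"
      using d unfolding B_def
      by (intro box_partial_derivatives_bound[where P="\<lambda>v w. pd v h w"])
        (auto simp: dist_norm intro!: smooth_on_has_vector_derivative_pd[OF h] less_imp_le)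
    also have "\<dots> \<le> e * norm (y - x)"
      using mult_left_mono[OF sum_Basis_abs_inner_le[of "y - x"], of "e / real DIM('a)"] \<open>e > 0\<close>
      by simp
    finally show "norm (h y - h x - (\<Sum>v\<in>Basis. ((y - x) \<bullet> v) *\<^sub>R pd v h x)) \<le> e * norm (y - x)" .
  qed
qed

lemma frechet_derivative_smooth_on:
  fixes h :: "'a::euclidean_space \<Rightarrow> 'b::euclidean_space"
  assumes "smooth_on U h" "x \<in> U" "v \<in> Basis"
  shows "frechet_derivative h (at x) v = pd v h x"
proof -
  have "frechet_derivative h (at x) v = (\<Sum>u\<in>Basis. (v \<bullet> u) *\<^sub>R pd u h x)"
    using frechet_derivative_at[OF smooth_on_has_derivative[OF assms(1,2)], symmetric] by simp
  also have "\<dots> = (\<Sum>u\<in>Basis. if u = v then pd u h x else 0)"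
    using assms(3) by (intro sum.cong) (auto simp: inner_Basis)
  also have "\<dots> = pd v h x"
    using assms(3) by (simp add: sum.delta')
  finally show ?thesis .
qed

definition near_linear_on :: "'a::real_normed_vector set \<Rightarrow> ('a \<Rightarrow> 'b::real_normed_vector) \<Rightarrow> real \<Rightarrow> ('a \<Rightarrow> 'b) \<Rightarrow> bool" where
  "near_linear_on S L \<theta> f \<longleftrightarrow> (\<forall>x\<in>S. \<forall>y\<in>S. norm (f x - f y - L (x - y)) \<le> \<theta> * norm (x - y))"

lemma near_linear_on_subset: "near_linear_on S L \<theta> f \<Longrightarrow> T \<subseteq> S \<Longrightarrow> near_linear_on T L \<theta> f"
  unfolding near_linear_on_def by blast

lemma smooth_on_near_linear_on:
  fixes h :: "'a::euclidean_space \<Rightarrow> 'b::euclidean_space"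
  assumes h: "smooth_on U h" and S: "convex S" "S \<subseteq> U" and L: "linear L"
    and bd: "\<And>w v. w \<in> S \<Longrightarrow> v \<in> Basis \<Longrightarrow> norm (pd v h w - L v) \<le> e"
  shows "near_linear_on S L (real DIM('a) * e) h"
  unfolding near_linear_on_def
proof (intro ballI)
  fix x y assume xy: "x \<in> S" "y \<in> S"
  define D where "D w z = (\<Sum>v\<in>Basis. (z \<bullet> v) *\<^sub>R (pd v h w - L v))" for w z
  have "((\<lambda>z. h z - L z) has_derivative D w) (at w within S)" if "w \<in> S" for w
  proof -
    have "((\<lambda>z. h z - L z) has_derivative (\<lambda>z. (\<Sum>v\<in>Basis. (z \<bullet> v) *\<^sub>R pd v h w) - L z)) (at w)"
      using that S(2) by (intro has_derivative_diff smooth_on_has_derivative[OF h] linear_imp_has_derivative[OF L]) auto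
    moreover have "(\<Sum>v\<in>Basis. (z \<bullet> v) *\<^sub>R pd v h w) - L z = D w z" for z
    proof -
      have "L z = L (\<Sum>v\<in>Basis. (z \<bullet> v) *\<^sub>R v)" by (simp add: euclidean_representation)
      also have "\<dots> = (\<Sum>v\<in>Basis. (z \<bullet> v) *\<^sub>R L v)" by (simp add: linear_sum[OF L] linear_scale[OF L])
      finally show ?thesis by (simp add: D_def scaleR_diff_right sum_subtractf)
    qed
    ultimately show ?thesis by (simp add: has_derivative_at_withinI)
  qed
  moreover have "onorm (D w) \<le> real DIM('a) * e" if "w \<in> S" for w
  proof (rule onorm_le)
    fix z
    have e: "e \<ge> 0" using order_trans[OF norm_ge_zero bd[OF that SOME_Basis]] .
    have "norm (D w z) \<le> (\<Sum>v\<in>Basis. \<bar>z \<bullet> v\<bar> * e)"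
      unfolding D_def by (rule order_trans[OF norm_sum sum_mono]) (simp add: mult_left_mono bd[OF that])
    also have "\<dots> = e * (\<Sum>v\<in>Basis. \<bar>z \<bullet> v\<bar>)" by (simp add: sum_distrib_left mult.commute)
    also have "\<dots> \<le> e * (real DIM('a) * norm z)" by (rule mult_left_mono[OF sum_Basis_abs_inner_le e])
    finally show "norm (D w z) \<le> real DIM('a) * e * norm z" by (simp add: mult_ac)
  qed
  ultimately have "norm ((h x - L x) - (h y - L y)) \<le> real DIM('a) * e * norm (x - y)"
    using xy by (intro differentiable_bound[OF S(1)]) auto
  then show "norm (h x - h y - L (x - y)) \<le> real DIM('a) * e * norm (x - y)"
    using L by (simp add: linear_diff algebra_simps)
qed

lemma linear_frechet_derivative_smooth_on:
  fixes h :: "'a::euclidean_space \<Rightarrow> 'b::euclidean_space"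
  shows "smooth_on U h \<Longrightarrow> x \<in> U \<Longrightarrow> linear (frechet_derivative h (at x))"
  using smooth_on_has_derivative differentiableI frechet_derivative_works has_derivative_linear
  by blast

lemma smooth_on_locally_near_linear_on:
  fixes h :: "'a::euclidean_space \<Rightarrow> 'b::euclidean_space"
  assumes h: "smooth_on U h" and x: "x \<in> U" and "e > 0"
  obtains R where "R > 0" "cball x R \<subseteq> U" "near_linear_on (cball x R) (frechet_derivative h (at x)) e h"
proof -
  obtain R where "R > 0" and
    R: "\<And>w. dist w x \<le> R \<Longrightarrow> w \<in> U \<and> (\<forall>v\<in>Basis. dist (pd v h w) (pd v h x) < e / real DIM('a))"
    using smooth_on_eventually_C1_near[OF h x, of "e / real DIM('a)"] \<open>e > 0\<close>
    by (auto simp: eventually_nhds_metric_le)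
  have "near_linear_on (cball x R) (frechet_derivative h (at x)) (real DIM('a) * (e / real DIM('a))) h"
    using linear_frechet_derivative_smooth_on[OF h x] R
    by (intro smooth_on_near_linear_on[OF h])
      (auto simp: frechet_derivative_smooth_on[OF h x] dist_commute dist_norm less_imp_le)
  moreover have "cball x R \<subseteq> U" using R by (auto simp: dist_commute)
  ultimately show ?thesis using that \<open>R > 0\<close> by simp
qed

section \<open>Maps close to homotheties\<close>

lemma near_linear_on_conjugate:
  fixes L :: "'a::real_normed_vector \<Rightarrow> 'b::real_normed_vector"
  assumes L: "linear L" "\<And>h. c * norm h \<le> norm (L h)" and c: "c > 0"
    and \<phi>: "near_linear_on C0 L \<eta> \<phi>" and H: "near_linear_on C (\<lambda>h. \<mu> *\<^sub>R L h) \<eta> H"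
    and G: "\<And>u. u \<in> C \<Longrightarrow> G u \<in> C0 \<and> \<phi> (G u) = H u"
    and \<eta>: "0 \<le> \<eta>" "\<eta> \<le> c / 2" and \<mu>: "\<bar>\<mu>\<bar> \<le> 1"
  shows "near_linear_on C (scaleR \<mu>) (4 * \<eta> / c) G"
  unfolding near_linear_on_def
proof (intro ballI)
  fix u u' assume u: "u \<in> C" "u' \<in> C"
  define w w' where "w = G u" and "w' = G u'"
  define \<Delta> where "\<Delta> = w - w' - \<mu> *\<^sub>R (u - u')"
  have "L \<Delta> = (H u - H u' - \<mu> *\<^sub>R L (u - u')) - (\<phi> w - \<phi> w' - L (w - w'))"
    unfolding \<Delta>_def using L(1) G u by (simp add: w_def w'_def linear_diff linear_scale)
  then have "c * norm \<Delta> \<le> \<eta> * norm (u - u') + \<eta> * norm (w - w')"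
    using L(2)[of \<Delta>] H u \<phi> G[OF u(1)] G[OF u(2)] norm_triangle_ineq4
    unfolding near_linear_on_def w_def w'_def by (smt (verit, best))
  moreover have "norm (w - w') \<le> norm \<Delta> + norm (u - u')"
    using norm_triangle_ineq[of \<Delta> "\<mu> *\<^sub>R (u - u')"] mult_left_le_one_le[OF norm_ge_zero abs_ge_zero \<mu>, of "u - u'"]
    by (simp add: \<Delta>_def)
  then have "\<eta> * norm (w - w') \<le> \<eta> * norm \<Delta> + \<eta> * norm (u - u')"
    using mult_left_mono[OF _ \<eta>(1)] by (fastforce simp: distrib_left)
  ultimately have "c * norm \<Delta> \<le> 2 * \<eta> * norm (u - u') + \<eta> * norm \<Delta>"
    by linarith
  then have "c / 2 * norm \<Delta> \<le> 2 * \<eta> * norm (u - u')"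
    using mult_right_mono[OF \<eta>(2) norm_ge_zero[of \<Delta>]] by linarith
  then show "norm (G u - G u' - \<mu> *\<^sub>R (u - u')) \<le> 4 * \<eta> / c * norm (u - u')"
    using c by (simp add: \<Delta>_def w_def w'_def field_simps)
qed

lemma near_linear_on_homothety_lipschitz:
  assumes "near_linear_on S (scaleR \<mu>) \<theta> f" "x \<in> S" "y \<in> S"
  shows "norm (f x - f y) \<le> (\<bar>\<mu>\<bar> + \<theta>) * norm (x - y)"
proof -
  have "norm (f x - f y - \<mu> *\<^sub>R (x - y)) \<le> \<theta> * norm (x - y)"
    using assms unfolding near_linear_on_def by blast
  then show ?thesis
    using norm_triangle_sub[of "f x - f y" "\<mu> *\<^sub>R (x - y)"] by (simp add: distrib_right)
qed

lemma near_homothety_unique_fixed_point: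
  fixes F :: "'a::banach \<Rightarrow> 'a"
  assumes F: "near_linear_on (cball u r) (scaleR \<mu>) \<theta> F" and q: "\<bar>\<mu>\<bar> + \<theta> \<le> 3 / 4"
    and u: "norm (F u - u) \<le> r / 4" "r \<ge> 0"
  shows "\<exists>!x. x \<in> cball u r \<and> F x = x"
proof (rule Banach_fix)
  have lip: "norm (F x - F y) \<le> 3 / 4 * norm (x - y)" if "x \<in> cball u r" "y \<in> cball u r" for x y
    using near_linear_on_homothety_lipschitz[OF F that] q mult_right_mono[OF q norm_ge_zero, of "x - y"] by linarith
  show "dist (F x) (F y) \<le> 3 / 4 * dist x y" if "x \<in> cball u r" "y \<in> cball u r" for x y
    using lip[OF that] by (simp add: dist_norm)
  show "F ` cball u r \<subseteq> cball u r"
  proof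
    fix y assume "y \<in> F ` cball u r"
    then obtain x where x: "x \<in> cball u r" "y = F x" by blast
    have "norm (F x - u) \<le> norm (F x - F u) + norm (F u - u)"
      by (rule norm_diff_triangle_le) auto
    also have "\<dots> \<le> 3 / 4 * r + r / 4"
      using lip[OF x(1)] u x(1) by (intro add_mono order_trans[OF lip[OF x(1)]]) (auto simp: dist_norm norm_minus_commute)
    finally show "y \<in> cball u r" using x by (simp add: dist_norm norm_minus_commute)
  qed
qed (use u in \<open>auto simp: complete_eq_closed\<close>)

lemma near_identity_orbit:
  fixes G :: "'a::real_normed_vector \<Rightarrow> 'a" and m j :: nat
  assumes G: "near_linear_on S id \<theta> G" and \<theta>: "\<theta> \<ge> 0" "4 * real m * \<theta> \<le> 1"
    and S: "cball x (2 * real m * norm (G x - x)) \<subseteq> S" and "j \<le> m"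
  shows "(G ^^ j) x \<in> cball x (2 * real j * norm (G x - x)) \<and>
         norm ((G ^^ Suc j) x - (G ^^ j) x - (G x - x)) \<le> 2 * real j * \<theta> * norm (G x - x)"
  using \<open>j \<le> m\<close>
proof (induction j)
  case 0
  then show ?case by simp
next
  case (Suc j)
  define D where "D = norm (G x - x)"
  define \<Delta> where "\<Delta> i = (G ^^ Suc i) x - (G ^^ i) x" for i
  have IH: "(G ^^ j) x \<in> cball x (2 * real j * D)" "norm (\<Delta> j - (G x - x)) \<le> 2 * real j * \<theta> * D"
    using Suc by (auto simp: D_def \<Delta>_def)
  have "2 * real j * \<theta> \<le> 1"
    using \<theta> Suc.prems mult_right_mono[of "real j" "real m" \<theta>] by simp
  then have "2 * real j * \<theta> * D \<le> D"
    using \<theta>(1) by (simp add: D_def mult_left_le_one_le)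
  then have step: "norm (\<Delta> j) \<le> 2 * D"
    using IH(2) norm_triangle_ineq2[of "\<Delta> j" "G x - x"] by (simp add: D_def)
  have in_ball: "(G ^^ Suc j) x \<in> cball x (2 * real (Suc j) * D)"
    using IH(1) step dist_triangle[of x "(G ^^ Suc j) x" "(G ^^ j) x"]
    by (simp add: \<Delta>_def dist_norm norm_minus_commute algebra_simps)
  have sub: "cball x (2 * real i * D) \<subseteq> S" if "i \<le> m" for i
    using S that by (intro order_trans[OF subset_cball S]) (simp add: D_def mult_right_mono)
  have in_S: "(G ^^ j) x \<in> S" "(G ^^ Suc j) x \<in> S"
    using sub[of j] sub[of "Suc j"] IH(1) in_ball Suc.prems by (meson Suc_leD subsetD)+
  have "norm (\<Delta> (Suc j) - \<Delta> j) \<le> \<theta> * norm (\<Delta> j)"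
    using G in_S unfolding near_linear_on_def \<Delta>_def by (metis funpow.simps(2) id_apply o_apply)
  also have "\<dots> \<le> 2 * \<theta> * D" using step \<theta>(1) mult_left_mono by fastforce
  finally have "norm (\<Delta> (Suc j) - (G x - x)) \<le> 2 * real (Suc j) * \<theta> * D"
    using IH(2) norm_triangle_le[of "\<Delta> (Suc j) - \<Delta> j" "\<Delta> j - (G x - x)"] by (simp add: algebra_simps)
  then show ?case using in_ball by (simp add: D_def \<Delta>_def)
qed

lemma near_identity_power:
  fixes G :: "'a::real_normed_vector \<Rightarrow> 'a" and m :: nat
  assumes G: "near_linear_on S id \<theta> G" and \<theta>: "\<theta> \<ge> 0" "4 * real m * \<theta> \<le> 1"
    and S: "cball x (2 * real m * norm (G x - x)) \<subseteq> S"
  shows "\<forall>j\<le>m. (G ^^ j) x \<in> S"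
    and "norm ((G ^^ m) x - x - real m *\<^sub>R (G x - x)) \<le> 2 * real m ^ 2 * \<theta> * norm (G x - x)"
proof -
  define D where "D = norm (G x - x)"
  note orbit = near_identity_orbit[OF G \<theta> S, folded D_def]
  have mono: "2 * real j * D \<le> 2 * real m * D" "2 * real j * \<theta> * D \<le> 2 * real m * \<theta> * D"
    if "j \<le> m" for j
    using that \<theta>(1) by (auto simp: D_def intro!: mult_right_mono)
  show "\<forall>j\<le>m. (G ^^ j) x \<in> S"
    using orbit mono(1) subset_cball S unfolding D_def by blast
  have "(G ^^ m) x - x = (\<Sum>j<m. (G ^^ Suc j) x - (G ^^ j) x)"
    using sum_lessThan_telescope[of "\<lambda>j. (G ^^ j) x" m] by simp
  then have "(G ^^ m) x - x - real m *\<^sub>R (G x - x) = (\<Sum>j<m. (G ^^ Suc j) x - (G ^^ j) x - (G x - x))"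
    by (simp add: sum_subtractf sum_constant_scaleR scaleR_diff_right)
  also have "norm \<dots> \<le> (\<Sum>j<m. 2 * real m * \<theta> * D)"
    using orbit mono(2) by (intro order_trans[OF norm_sum sum_mono]) (meson lessThan_iff less_imp_le order_trans)
  also have "\<dots> = 2 * real m ^ 2 * \<theta> * D"
    by (simp add: power2_eq_square)
  finally show "norm ((G ^^ m) x - x - real m *\<^sub>R (G x - x)) \<le> 2 * real m ^ 2 * \<theta> * norm (G x - x)"
    by (simp add: D_def)
qed

text \<open>Compare $F(Gx) - x \approx (Gx - x)/k$ with $G^k x - x \approx k\,(Gx - x)$.\<close>
lemma fixed_point_of_power_relation:
  fixes F G :: "'a::real_normed_vector \<Rightarrow> 'a"
  assumes G: "near_linear_on S id \<theta> G" and F: "near_linear_on S (scaleR (1 / real k)) \<theta> F"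
    and x: "x \<in> S" "F x = x" and S: "cball x (2 * real k * norm (G x - x)) \<subseteq> S"
    and rel: "(\<forall>j\<le>k. (G ^^ j) x \<in> S) \<Longrightarrow> F (G x) = (G ^^ k) x"
    and k: "k \<ge> 2" and \<theta>: "0 \<le> \<theta>" "\<theta> \<le> 1 / (4 * real k ^ 2)"
  shows "G x = x"
proof -
  define D where "D = norm (G x - x)"
  have "4 * real k * \<theta> \<le> 4 * real k ^ 2 * \<theta>"
    using k \<theta>(1) by (intro mult_right_mono) (auto simp: power2_eq_square)
  moreover have k2\<theta>: "4 * real k ^ 2 * \<theta> \<le> 1"
    using \<theta>(2) k by (simp add: field_simps)
  ultimately have "4 * real k * \<theta> \<le> 1" by linarith
  note power = near_identity_power[OF G \<theta>(1) this S]
  have A: "norm ((G ^^ k) x - x - real k *\<^sub>R (G x - x)) \<le> 1 / 2 * D"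
    using power(2) mult_right_mono[OF k2\<theta>, of D] by (simp add: D_def)
  have "norm (F (G x) - F x - (1 / real k) *\<^sub>R (G x - x)) \<le> \<theta> * D"
    using F[unfolded near_linear_on_def, rule_format, of "G x" x] spec[OF power(1), of 1] x k
    by (simp add: D_def)
  also have "\<dots> \<le> 1 / 4 * D"
  proof -
    have "4 \<le> real k ^ 2" using k power_mono[of 2 "real k" 2] by simp
    then have "\<theta> \<le> 1 / 4" using k2\<theta> \<theta>(1) mult_right_mono[of 4 "real k ^ 2" \<theta>] by linarith
    then show ?thesis unfolding D_def by (rule mult_right_mono) simp
  qed
  finally have B: "norm ((G ^^ k) x - x - (1 / real k) *\<^sub>R (G x - x)) \<le> 1 / 4 * D"
    using rel[OF power(1)] x(2) by simp
  have k_inv: "real k \<ge> 2" "1 / real k \<le> 1 / 2" using k by (simp_all add: field_simps)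
  have "(real k - 1 / real k) * D \<le> 3 / 4 * D"
  proof -
    have "(real k - 1 / real k) *\<^sub>R (G x - x) = ((G ^^ k) x - x - (1 / real k) *\<^sub>R (G x - x))
                  - ((G ^^ k) x - x - real k *\<^sub>R (G x - x))"
      by (simp add: scaleR_diff_left)
    moreover have "real k - 1 / real k \<ge> 0" using k k_inv by linarith
    ultimately have "(real k - 1 / real k) * D \<le> norm ((G ^^ k) x - x - (1 / real k) *\<^sub>R (G x - x))
                  + norm ((G ^^ k) x - x - real k *\<^sub>R (G x - x))"
      by (metis D_def abs_of_nonneg norm_scaleR norm_triangle_ineq4)
    then show ?thesis using A B by linarith
  qed
  moreover have "3 / 2 \<le> real k - 1 / real k" using k_inv by linarith
  then have "3 / 2 * D \<le> (real k - 1 / real k) * D"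
    unfolding D_def by (rule mult_right_mono) simp
  ultimately have "D = 0"
    using norm_ge_zero[of "G x - x"] unfolding D_def by linarith
  then show ?thesis by (simp add: D_def)
qed

section \<open>The topology of $\mathrm{Hom}(\Gamma_{n,k},\mathrm{Diff}(M))$\<close>

lemma Diff_smooth_on_chart:
  fixes \<phi> :: "'d::euclidean_space \<Rightarrow> 'e::euclidean_space"
  shows "f \<in> Diff TYPE('d) M \<Longrightarrow> chart M \<phi> V \<Longrightarrow> smooth_on V (f \<circ> \<phi>)"
  unfolding Diff_def smooth_self_map_def by blast

lemma Diff_maps_into: "f \<in> Diff D M \<Longrightarrow> x \<in> M \<Longrightarrow> f x \<in> M"
  unfolding Diff_def smooth_self_map_def by blast

lemma Hom_topspace_Diff: "\<rho> \<in> topspace (Hom_top D M n k) \<Longrightarrow> i \<in> {0..n} \<Longrightarrow> \<rho> i \<in> Diff D M"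
  unfolding Hom_top_def Diff_top_def by (auto simp: PiE_iff)

lemma Hom_topspace_relation:
  "\<rho> \<in> topspace (Hom_top D M n k) \<Longrightarrow> i \<in> {1..n} \<Longrightarrow> \<rho> 0 \<circ> \<rho> i = (\<rho> i ^^ k) \<circ> \<rho> 0"
  unfolding Hom_top_def by auto

lemma openin_Diff_top_Cinf_nbhd:
  fixes \<phi> :: "'d::euclidean_space \<Rightarrow> 'e::euclidean_space"
  assumes "f \<in> Diff TYPE('d) M" "chart M \<phi> V" "compact K" "K \<subseteq> V" "set vs \<subseteq> Basis" "\<epsilon> > 0"
  shows "openin (Diff_top TYPE('d) M) (Diff TYPE('d) M \<inter> Cinf_nbhd M f \<phi> K vs \<epsilon>)"
  unfolding Diff_top_def
  by (rule openin_subtopology_Int2, rule topology_generated_by_Basis) (use assms in blast)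

lemma openin_Hom_top_componentwise:
  assumes "\<And>i. i \<in> {0..n} \<Longrightarrow> openin (Diff_top D M) (W i)"
  shows "openin (Hom_top D M n k) {\<rho> \<in> topspace (Hom_top D M n k). \<forall>i\<in>{0..n}. \<rho> i \<in> W i}"
proof -
  define R where "R = {\<rho>::nat \<Rightarrow> 'a \<Rightarrow> 'a. (\<forall>i\<in>{1..n}. \<rho> 0 \<circ> \<rho> i = (\<rho> i ^^ k) \<circ> \<rho> 0) \<and>
         (\<forall>i\<in>{1..n}. \<forall>j\<in>{1..n}. \<rho> i \<circ> \<rho> j = \<rho> j \<circ> \<rho> i)}"
  have Hom: "Hom_top D M n k = subtopology (product_topology (\<lambda>_. Diff_top D M) {0..n}) R"
    unfolding Hom_top_def R_def by simp
  have "openin (Hom_top D M n k) (R \<inter> PiE {0..n} W)"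
    unfolding Hom using assms by (intro openin_subtopology_Int2) (auto simp: openin_PiE_gen)
  moreover have "W i \<subseteq> topspace (Diff_top D M)" if "i \<in> {0..n}" for i
    using openin_subset[OF assms[OF that]] .
  then have "{\<rho> \<in> topspace (Hom_top D M n k). \<forall>i\<in>{0..n}. \<rho> i \<in> W i} = R \<inter> PiE {0..n} W"
    unfolding Hom by (auto simp: PiE_iff extensional_def; force)
  ultimately show ?thesis by simp
qed

definition C1_close_in_chart :: "('d::euclidean_space \<Rightarrow> 'e::euclidean_space) \<Rightarrow> 'd set \<Rightarrow> real
    \<Rightarrow> ('e \<Rightarrow> 'e) \<Rightarrow> ('e \<Rightarrow> 'e) \<Rightarrow> bool" where
  "C1_close_in_chart \<phi> K \<delta> f g \<longleftrightarrow> (\<forall>u\<in>K. dist (g (\<phi> u)) (f (\<phi> u)) < \<delta> \<and>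
      (\<forall>v\<in>Basis. dist (pd v (g \<circ> \<phi>) u) (pd v (f \<circ> \<phi>) u) < \<delta>))"

definition Hom_C1_nbhd :: "'d::euclidean_space itself \<Rightarrow> 'e::euclidean_space set \<Rightarrow> nat \<Rightarrow> nat
    \<Rightarrow> ('d \<Rightarrow> 'e) \<Rightarrow> 'd set \<Rightarrow> (nat \<Rightarrow> 'e \<Rightarrow> 'e) \<Rightarrow> real \<Rightarrow> (nat \<Rightarrow> 'e \<Rightarrow> 'e) set" where
  "Hom_C1_nbhd D M n k \<phi> K \<rho>0 \<delta> =
     {\<rho> \<in> topspace (Hom_top D M n k). \<forall>i\<in>{0..n}. C1_close_in_chart \<phi> K \<delta> (\<rho>0 i) (\<rho> i)}"

lemma Hom_C1_nbhd_self: "\<rho> \<in> topspace (Hom_top D M n k) \<Longrightarrow> \<delta> > 0 \<Longrightarrow> \<rho> \<in> Hom_C1_nbhd D M n k \<phi> K \<rho> \<delta>"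
  unfolding Hom_C1_nbhd_def C1_close_in_chart_def by simp

lemma openin_Hom_C1_nbhd:
  fixes \<phi> :: "'d::euclidean_space \<Rightarrow> 'e::euclidean_space"
  assumes \<rho>0: "\<rho>0 \<in> topspace (Hom_top TYPE('d) M n k)" and K: "chart M \<phi> V" "compact K" "K \<subseteq> V"
    and "\<delta> > 0"
  shows "openin (Hom_top TYPE('d) M n k) (Hom_C1_nbhd TYPE('d) M n k \<phi> K \<rho>0 \<delta>)"
proof -
  define W where "W i = (Diff TYPE('d) M \<inter> Cinf_nbhd M (\<rho>0 i) \<phi> K [] \<delta>) \<inter>
      (\<Inter>v\<in>Basis. Diff TYPE('d) M \<inter> Cinf_nbhd M (\<rho>0 i) \<phi> K [v] \<delta>)" for i
  have W_open: "openin (Diff_top TYPE('d) M) (W i)" if "i \<in> {0..n}" for i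
    unfolding W_def using \<open>\<delta> > 0\<close>
    by (intro openin_Int openin_INT2 finite_Basis nonempty_Basis
        openin_Diff_top_Cinf_nbhd[OF Hom_topspace_Diff[OF \<rho>0 that] K]) auto
  have "g \<in> W i \<longleftrightarrow> C1_close_in_chart \<phi> K \<delta> (\<rho>0 i) g" if "g \<in> Diff TYPE('d) M" for g i
    unfolding W_def Cinf_nbhd_def C1_close_in_chart_def using that by (simp add: dist_norm) blast
  then have "Hom_C1_nbhd TYPE('d) M n k \<phi> K \<rho>0 \<delta> =
      {\<rho> \<in> topspace (Hom_top TYPE('d) M n k). \<forall>i\<in>{0..n}. \<rho> i \<in> W i}"
    unfolding Hom_C1_nbhd_def using Hom_topspace_Diff by blast
  then show ?thesis using openin_Hom_top_componentwise[OF W_open] by simp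
qed

lemma pd_chart_deriv_scalar_at:
  fixes \<phi> :: "'d::euclidean_space \<Rightarrow> 'e::euclidean_space"
  assumes ch: "chart M \<phi> V" and u: "u \<in> V" and f: "f \<in> Diff TYPE('d) M"
    and "deriv_scalar_at TYPE('d) M f (\<phi> u) \<mu>" and v: "v \<in> Basis"
  shows "pd v (f \<circ> \<phi>) u = \<mu> *\<^sub>R frechet_derivative \<phi> (at u) v"
proof -
  have "frechet_derivative (f \<circ> \<phi>) (at u) = (\<lambda>h. \<mu> *\<^sub>R frechet_derivative \<phi> (at u) h)"
    using assms ch u unfolding deriv_scalar_at_def by blast
  then show ?thesis
    using frechet_derivative_smooth_on[OF Diff_smooth_on_chart[OF f ch] u v] by simp
qed

lemma chart_derivative_bounded_below:
  fixes \<phi> :: "'d::euclidean_space \<Rightarrow> 'e::euclidean_space"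
  assumes ch: "chart M \<phi> V" and u: "u \<in> V"
  obtains c where "c > 0" "\<And>h. c * norm h \<le> norm (frechet_derivative \<phi> (at u) h)"
proof -
  have "smooth_on V \<phi>" "inj (frechet_derivative \<phi> (at u))"
    using ch u unfolding chart_def by auto
  then show ?thesis
    using linear_inj_bounded_below_pos linear_frechet_derivative_smooth_on u that by metis
qed

lemma continuous_on_openin_near:
  assumes g: "continuous_on T g" and T: "openin (top_of_set M) T" and y0: "y0 \<in> T" and "e > 0"
  shows "\<exists>\<sigma>>0. \<forall>y\<in>M. dist y y0 < \<sigma> \<longrightarrow> y \<in> T \<and> dist (g y) (g y0) < e"
proof -
  obtain \<sigma>1 where "\<sigma>1 > 0" "\<forall>y\<in>M. dist y y0 < \<sigma>1 \<longrightarrow> y \<in> T"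
    using T y0 unfolding openin_euclidean_subtopology_iff by blast
  moreover obtain \<sigma>2 where "\<sigma>2 > 0" "\<forall>y\<in>T. dist y y0 < \<sigma>2 \<longrightarrow> dist (g y) (g y0) < e"
    using g y0 \<open>e > 0\<close> unfolding continuous_on_iff by blast
  ultimately show ?thesis by (intro exI[of _ "min \<sigma>1 \<sigma>2"]) auto
qed

section \<open>Estimates in a chart around the fixed point\<close>

definition chart_near_homothety :: "('e \<Rightarrow> 'd) \<Rightarrow> ('d \<Rightarrow> 'e) \<Rightarrow> 'd set \<Rightarrow> 'd::real_normed_vector set
    \<Rightarrow> real \<Rightarrow> real \<Rightarrow> ('e \<Rightarrow> 'e) \<Rightarrow> bool" where
  "chart_near_homothety \<psi> \<phi> V C \<mu> \<theta> g \<longleftrightarrow>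
     (\<forall>u\<in>C. g (\<phi> u) \<in> \<phi> ` V) \<and> near_linear_on C (scaleR \<mu>) \<theta> (\<psi> \<circ> g \<circ> \<phi>)"

lemma chart_conjugate_near_homothety:
  fixes \<phi> :: "'d::euclidean_space \<Rightarrow> 'e::euclidean_space"
  assumes ch: "chart M \<phi> V" and hom: "homeomorphism V (\<phi> ` V) \<phi> \<psi>" and C: "convex C" "C \<subseteq> V"
    and L: "linear L" "\<And>h. c * norm h \<le> norm (L h)" "c > 0"
    and \<phi>L: "near_linear_on C0 L \<eta> \<phi>" and \<eta>: "0 \<le> \<eta>" "\<eta> \<le> c / 2"
    and \<sigma>: "\<And>y. y \<in> M \<Longrightarrow> dist y p < \<sigma> \<Longrightarrow> y \<in> \<phi> ` V \<and> \<psi> y \<in> C0"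
    and g: "g \<in> Diff TYPE('d) M" "\<And>u. u \<in> C \<Longrightarrow> dist (g (\<phi> u)) p < \<sigma>"
    and dg: "\<And>u v. u \<in> C \<Longrightarrow> v \<in> Basis \<Longrightarrow> norm (pd v (g \<circ> \<phi>) u - \<mu> *\<^sub>R L v) \<le> \<eta> / DIM('d)"
    and \<mu>: "\<bar>\<mu>\<bar> \<le> 1"
  shows "chart_near_homothety \<psi> \<phi> V C \<mu> (4 * \<eta> / c) g"
proof -
  have "\<phi> ` V \<subseteq> M" using ch by (simp add: chart_def)
  then have in_chart: "g (\<phi> u) \<in> \<phi> ` V \<and> \<psi> (g (\<phi> u)) \<in> C0" if "u \<in> C" for u
    using \<sigma> g C(2) Diff_maps_into that by blast
  have "near_linear_on C (scaleR \<mu>) (4 * \<eta> / c) (\<psi> \<circ> g \<circ> \<phi>)"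
  proof (rule near_linear_on_conjugate[OF L \<phi>L _ _ \<eta> \<mu>])
    show "near_linear_on C (\<lambda>h. \<mu> *\<^sub>R L h) \<eta> (g \<circ> \<phi>)"
      using smooth_on_near_linear_on[OF Diff_smooth_on_chart[OF g(1) ch] C
          real_vector.module_hom_scale[OF L(1)] dg]
      by simp
    show "(\<psi> \<circ> g \<circ> \<phi>) u \<in> C0 \<and> \<phi> ((\<psi> \<circ> g \<circ> \<phi>) u) = (g \<circ> \<phi>) u" if "u \<in> C" for u
      using in_chart[OF that] homeomorphism_apply2[OF hom] by simp
  qed
  then show ?thesis using in_chart unfolding chart_near_homothety_def by blast
qed

text \<open>The radius $R$ must not depend on $s$: the displacement $s$ allowed at the base point
  is later chosen proportional to $R$.\<close>
lemma Diff_chart_estimates: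
  fixes \<phi> :: "'d::euclidean_space \<Rightarrow> 'e::euclidean_space"
  assumes ch: "chart M \<phi> V" and hom: "homeomorphism V (\<phi> ` V) \<phi> \<psi>" and u0: "u0 \<in> V"
    and f: "f \<in> Diff TYPE('d) M" "f (\<phi> u0) = \<phi> u0" "deriv_scalar_at TYPE('d) M f (\<phi> u0) \<mu>"
    and \<mu>: "\<bar>\<mu>\<bar> \<le> 1" and \<theta>: "0 < \<theta>" "\<theta> \<le> 2"
  shows "\<forall>\<^sub>F R in at_right 0. cball u0 R \<subseteq> V \<and> (\<forall>s>0. \<forall>\<^sub>F \<delta> in at_right 0.
           \<forall>g\<in>Diff TYPE('d) M. C1_close_in_chart \<phi> (cball u0 R) \<delta> f g \<longrightarrow>
             chart_near_homothety \<psi> \<phi> V (cball u0 R) \<mu> \<theta> g \<and> dist (\<psi> (g (\<phi> u0))) u0 < s)"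
proof -
  define L where "L = frechet_derivative \<phi> (at u0)"
  have sm: "smooth_on V \<phi>" and \<phi>M: "\<phi> ` V \<subseteq> M" and opM: "openin (top_of_set M) (\<phi> ` V)"
    using ch by (simp_all add: chart_def)
  have \<psi>c: "continuous_on (\<phi> ` V) \<psi>" using hom by (simp add: homeomorphism_def)
  obtain c where c: "c > 0" "\<And>h. c * norm h \<le> norm (L h)"
    using chart_derivative_bounded_below[OF ch u0] unfolding L_def by blast
  define \<eta> where "\<eta> = c * \<theta> / 4"
  have \<eta>: "0 < \<eta>" "\<eta> \<le> c / 2" "4 * \<eta> / c = \<theta>" using c \<theta> by (auto simp: \<eta>_def)
  obtain R0 where R0: "R0 > 0" "near_linear_on (cball u0 R0) L \<eta> \<phi>"
    using smooth_on_locally_near_linear_on[OF sm u0 \<eta>(1)] unfolding L_def by blast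
  have \<psi>_near: "\<exists>\<sigma>>0. \<forall>y\<in>M. dist y (\<phi> u0) < \<sigma> \<longrightarrow> y \<in> \<phi> ` V \<and> dist (\<psi> y) u0 < e" if "e > 0" for e
    using continuous_on_openin_near[OF \<psi>c opM _ that, of "\<phi> u0"] u0 homeomorphism_apply1[OF hom u0] by auto
  obtain \<sigma> where \<sigma>: "\<sigma> > 0" "\<And>y. y \<in> M \<Longrightarrow> dist y (\<phi> u0) < \<sigma> \<Longrightarrow> y \<in> \<phi> ` V \<and> dist (\<psi> y) u0 < R0"
    using \<psi>_near[OF R0(1)] by blast
  have \<sigma>C0: "y \<in> \<phi> ` V \<and> \<psi> y \<in> cball u0 R0" if "y \<in> M" "dist y (\<phi> u0) < \<sigma>" for y
    using \<sigma>(2)[OF that] by (simp add: dist_commute)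
  define \<epsilon> where "\<epsilon> = min (\<sigma> / 2) (\<eta> / (2 * DIM('d)))"
  have \<epsilon>: "\<epsilon> > 0" "2 * \<epsilon> \<le> \<sigma>" "2 * \<epsilon> \<le> \<eta> / DIM('d)"
    using \<sigma> \<eta> by (auto simp: \<epsilon>_def)
  have df: "pd v (f \<circ> \<phi>) u0 = \<mu> *\<^sub>R L v" if "v \<in> Basis" for v
    using pd_chart_deriv_scalar_at[OF ch u0 f(1,3) that] by (simp add: L_def)
  have "\<forall>\<^sub>F w in nhds u0. w \<in> V \<and> dist ((f \<circ> \<phi>) w) ((f \<circ> \<phi>) u0) < \<epsilon> \<and>
      (\<forall>v\<in>Basis. dist (pd v (f \<circ> \<phi>) w) (pd v (f \<circ> \<phi>) u0) < \<epsilon>)"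
    by (rule smooth_on_eventually_C1_near[OF Diff_smooth_on_chart[OF f(1) ch] u0 \<epsilon>(1)])
  then obtain R1 where "R1 > 0" and R1: "\<And>w. dist w u0 \<le> R1 \<Longrightarrow> w \<in> V \<and> dist ((f \<circ> \<phi>) w) ((f \<circ> \<phi>) u0) < \<epsilon> \<and>
      (\<forall>v\<in>Basis. dist (pd v (f \<circ> \<phi>) w) (pd v (f \<circ> \<phi>) u0) < \<epsilon>)"
    unfolding eventually_nhds_metric_le by blast
  show ?thesis
    unfolding eventually_at_right_field
  proof (rule exI[of _ R1], intro conjI allI impI \<open>R1 > 0\<close>)
    fix R s :: real assume R: "0 < R" "R < R1" and "s > 0"
    have R1': "dist w u0 \<le> R1" if "w \<in> cball u0 R" for w using that R by (simp add: dist_commute)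
    show CV: "cball u0 R \<subseteq> V" using R1 R1' by blast
    obtain \<sigma>' where "\<sigma>' > 0" and \<sigma>': "\<And>y. y \<in> M \<Longrightarrow> dist y (\<phi> u0) < \<sigma>' \<Longrightarrow> dist (\<psi> y) u0 < s"
      using \<psi>_near[OF \<open>s > 0\<close>] by blast
    have est: "chart_near_homothety \<psi> \<phi> V (cball u0 R) \<mu> \<theta> g \<and> dist (\<psi> (g (\<phi> u0))) u0 < s"
      if \<delta>: "\<delta> < min \<epsilon> \<sigma>'" and g: "g \<in> Diff TYPE('d) M"
        and "C1_close_in_chart \<phi> (cball u0 R) \<delta> f g" for \<delta> g
    proof
      note close = \<open>C1_close_in_chart \<phi> (cball u0 R) \<delta> f g\<close>[unfolded C1_close_in_chart_def]
      have gM: "g (\<phi> w) \<in> M" if "w \<in> cball u0 R" for w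
        using that CV \<phi>M Diff_maps_into[OF g] by blast
      have near: "dist (g (\<phi> w)) (\<phi> u0) < \<sigma>" if "w \<in> cball u0 R" for w
      proof -
        have "dist (g (\<phi> w)) (\<phi> u0) \<le> dist (g (\<phi> w)) (f (\<phi> w)) + dist (f (\<phi> w)) (\<phi> u0)"
          by (rule dist_triangle)
        also have "\<dots> < \<delta> + \<epsilon>"
          using close that R1[OF R1'[OF that]] f(2) by (intro add_strict_mono) auto
        finally show ?thesis using \<delta> \<epsilon>(2) by linarith
      qed
      have "chart_near_homothety \<psi> \<phi> V (cball u0 R) \<mu> (4 * \<eta> / c) g"
      proof (rule chart_conjugate_near_homothety[OF ch hom convex_cball CV _ c(2,1) R0(2) _ \<eta>(2) \<sigma>C0 g near _ \<mu>])
        show "linear L" using linear_frechet_derivative_smooth_on[OF sm u0] by (simp add: L_def)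
        show "0 \<le> \<eta>" using \<eta>(1) by simp
        fix w v :: 'd assume w: "w \<in> cball u0 R" and v: "v \<in> Basis"
        have "norm (pd v (g \<circ> \<phi>) w - \<mu> *\<^sub>R L v)
            \<le> norm (pd v (g \<circ> \<phi>) w - pd v (f \<circ> \<phi>) w) + norm (pd v (f \<circ> \<phi>) w - pd v (f \<circ> \<phi>) u0)"
          using norm_triangle_ineq[of "pd v (g \<circ> \<phi>) w - pd v (f \<circ> \<phi>) w" "pd v (f \<circ> \<phi>) w - pd v (f \<circ> \<phi>) u0"]
          by (simp add: df[OF v])
        also have "\<dots> < \<delta> + \<epsilon>"
          using close w v R1[OF R1'[OF w]] by (intro add_strict_mono) (auto simp: dist_norm)
        finally show "norm (pd v (g \<circ> \<phi>) w - \<mu> *\<^sub>R L v) \<le> \<eta> / DIM('d)"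
          using \<delta> \<epsilon>(3) by linarith
      qed
      then show "chart_near_homothety \<psi> \<phi> V (cball u0 R) \<mu> \<theta> g" using \<eta>(3) by simp
      have "dist (g (\<phi> u0)) (\<phi> u0) < \<sigma>'"
        using close \<delta> f(2) R by (metis centre_in_cball less_imp_le min_less_iff_conj order.strict_trans)
      then show "dist (\<psi> (g (\<phi> u0))) u0 < s"
        using \<sigma>' gM R by simp
    qed
    show "\<exists>b>0. \<forall>\<delta>>0. \<delta> < b \<longrightarrow> (\<forall>g\<in>Diff TYPE('d) M. C1_close_in_chart \<phi> (cball u0 R) \<delta> f g \<longrightarrow>
        chart_near_homothety \<psi> \<phi> V (cball u0 R) \<mu> \<theta> g \<and> dist (\<psi> (g (\<phi> u0))) u0 < s)"
      using est \<epsilon>(1) \<open>\<sigma>' > 0\<close> by (intro exI[of _ "min \<epsilon> \<sigma>'"]) auto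
  qed
qed

lemma Hom_chart_estimates:
  fixes \<phi> :: "'d::euclidean_space \<Rightarrow> 'e::euclidean_space"
  assumes ch: "chart M \<phi> V" and hom: "homeomorphism V (\<phi> ` V) \<phi> \<psi>" and u0: "u0 \<in> V"
    and \<rho>0: "\<rho>0 \<in> topspace (Hom_top TYPE('d) M n k)"
    and fixed: "\<And>i. i \<in> {0..n} \<Longrightarrow> \<rho>0 i (\<phi> u0) = \<phi> u0"
    and dsc: "\<And>i. i \<in> {0..n} \<Longrightarrow> deriv_scalar_at TYPE('d) M (\<rho>0 i) (\<phi> u0) (\<mu> i)"
    and \<mu>: "\<And>i. \<bar>\<mu> i\<bar> \<le> 1" and \<theta>: "0 < \<theta>" "\<theta> \<le> 2"
  obtains R where "R > 0" "cball u0 R \<subseteq> V"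
    "\<And>s. s > 0 \<Longrightarrow> \<exists>\<delta>>0. \<forall>\<rho>\<in>Hom_C1_nbhd TYPE('d) M n k \<phi> (cball u0 R) \<rho>0 \<delta>. \<forall>i\<in>{0..n}.
        chart_near_homothety \<psi> \<phi> V (cball u0 R) (\<mu> i) \<theta> (\<rho> i) \<and> dist (\<psi> (\<rho> i (\<phi> u0))) u0 < s"
proof -
  define Q where "Q R s i g \<longleftrightarrow>
      chart_near_homothety \<psi> \<phi> V (cball u0 R) (\<mu> i) \<theta> g \<and> dist (\<psi> (g (\<phi> u0))) u0 < s" for R s i g
  have "\<forall>\<^sub>F R in at_right 0. \<forall>i\<in>{0..n}. cball u0 R \<subseteq> V \<and> (\<forall>s>0. \<forall>\<^sub>F \<delta> in at_right 0.
      \<forall>g\<in>Diff TYPE('d) M. C1_close_in_chart \<phi> (cball u0 R) \<delta> (\<rho>0 i) g \<longrightarrow> Q R s i g)"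
    unfolding Q_def using Diff_chart_estimates[OF ch hom u0 Hom_topspace_Diff[OF \<rho>0] fixed dsc \<mu> \<theta>]
    by (intro eventually_ball_finite) auto
  then obtain R where R: "R > 0" and est: "\<forall>i\<in>{0..n}. cball u0 R \<subseteq> V \<and> (\<forall>s>0. \<forall>\<^sub>F \<delta> in at_right 0.
      \<forall>g\<in>Diff TYPE('d) M. C1_close_in_chart \<phi> (cball u0 R) \<delta> (\<rho>0 i) g \<longrightarrow> Q R s i g)"
    unfolding eventually_at_right_field using field_lbound_gt_zero by metis
  show thesis
  proof (rule that[OF R])
    show "cball u0 R \<subseteq> V" using est by auto
    fix s :: real assume "s > 0"
    then have "\<forall>\<^sub>F \<delta> in at_right 0. \<forall>i\<in>{0..n}.
        \<forall>g\<in>Diff TYPE('d) M. C1_close_in_chart \<phi> (cball u0 R) \<delta> (\<rho>0 i) g \<longrightarrow> Q R s i g"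
      using est by (intro eventually_ball_finite) auto
    then obtain \<delta> where "\<delta> > 0" and \<delta>: "\<forall>i\<in>{0..n}.
        \<forall>g\<in>Diff TYPE('d) M. C1_close_in_chart \<phi> (cball u0 R) \<delta> (\<rho>0 i) g \<longrightarrow> Q R s i g"
      unfolding eventually_at_right_field using field_lbound_gt_zero by metis
    have "\<forall>\<rho>\<in>Hom_C1_nbhd TYPE('d) M n k \<phi> (cball u0 R) \<rho>0 \<delta>. \<forall>i\<in>{0..n}. Q R s i (\<rho> i)"
      using \<delta> Hom_topspace_Diff unfolding Hom_C1_nbhd_def by blast
    then show "\<exists>\<delta>>0. \<forall>\<rho>\<in>Hom_C1_nbhd TYPE('d) M n k \<phi> (cball u0 R) \<rho>0 \<delta>. \<forall>i\<in>{0..n}.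
        chart_near_homothety \<psi> \<phi> V (cball u0 R) (\<mu> i) \<theta> (\<rho> i) \<and> dist (\<psi> (\<rho> i (\<phi> u0))) u0 < s"
      using \<open>\<delta> > 0\<close> unfolding Q_def by blast
  qed
qed

lemma chart_fixed_imp_fixed:
  assumes "homeomorphism V (\<phi> ` V) \<phi> \<psi>" "f (\<phi> x) \<in> \<phi> ` V" "\<psi> (f (\<phi> x)) = x"
  shows "f (\<phi> x) = \<phi> x"
  using homeomorphism_apply2[OF assms(1,2)] assms(3) by simp

lemma chart_conjugate_power_relation:
  assumes hom: "homeomorphism V (\<phi> ` V) \<phi> \<psi>" and rel: "f0 \<circ> f = (f ^^ k) \<circ> f0"
    and f: "\<forall>u\<in>C. f (\<phi> u) \<in> \<phi> ` V" and C: "C \<subseteq> V"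
    and x: "f0 (\<phi> x) = \<phi> x" and orbit: "\<forall>j\<le>k. ((\<psi> \<circ> f \<circ> \<phi>) ^^ j) x \<in> C"
  shows "(\<psi> \<circ> f0 \<circ> \<phi>) ((\<psi> \<circ> f \<circ> \<phi>) x) = ((\<psi> \<circ> f \<circ> \<phi>) ^^ k) x"
proof -
  define G where "G = \<psi> \<circ> f \<circ> \<phi>"
  have iter: "\<phi> ((G ^^ j) x) = (f ^^ j) (\<phi> x)" if "j \<le> k" for j
    using that
  proof (induction j)
    case (Suc j)
    then have "(G ^^ j) x \<in> C" using orbit by (simp add: G_def)
    then have "\<phi> (G ((G ^^ j) x)) = f (\<phi> ((G ^^ j) x))"
      using f homeomorphism_apply2[OF hom] by (simp add: G_def)
    then show ?case using Suc by simp
  qed simp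
  have "x \<in> C" using spec[OF orbit, of 0] by simp
  then have "\<phi> (G x) = f (\<phi> x)" using f homeomorphism_apply2[OF hom] by (simp add: G_def)
  then have "(\<psi> \<circ> f0 \<circ> \<phi>) (G x) = \<psi> (f0 (f (\<phi> x)))" by simp
  also have "\<dots> = \<psi> ((f ^^ k) (f0 (\<phi> x)))" using fun_cong[OF rel, of "\<phi> x"] by simp
  also have "\<dots> = \<psi> (\<phi> ((G ^^ k) x))" using iter[of k] x by simp
  also have "\<dots> = (G ^^ k) x"
    using homeomorphism_apply1[OF hom] spec[OF orbit, of k] C by (auto simp: G_def)
  finally show ?thesis by (simp add: G_def)
qed

section \<open>The fixed point of a nearby action\<close>

text \<open>The radius $4kr$ leaves room for the first $k$ steps of the $b_i$-orbit of a point of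
  the ball of radius $r$ around $u_0$.\<close>
lemma chart_global_fixed_point:
  fixes \<phi> :: "'d::euclidean_space \<Rightarrow> 'e::euclidean_space"
  assumes hom: "homeomorphism V (\<phi> ` V) \<phi> \<psi>" and \<rho>: "\<rho> \<in> topspace (Hom_top TYPE('d) M n k)"
    and k: "k \<ge> 2" and CV: "cball u0 (4 * real k * r) \<subseteq> V"
    and a: "chart_near_homothety \<psi> \<phi> V (cball u0 (4 * real k * r)) (1 / real k) \<theta> (\<rho> 0)"
    and b: "\<forall>i\<in>{1..n}. chart_near_homothety \<psi> \<phi> V (cball u0 (4 * real k * r)) 1 \<theta> (\<rho> i) \<and>
              dist (\<psi> (\<rho> i (\<phi> u0))) u0 < r / 4"
    and \<theta>: "0 \<le> \<theta>" "\<theta> \<le> 1 / (4 * real k ^ 2)"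
    and x: "x \<in> cball u0 r" "\<psi> (\<rho> 0 (\<phi> x)) = x"
  shows "global_fixed_point n \<rho> (\<phi> x)"
  unfolding global_fixed_point_def
proof
  define C where "C = cball u0 (4 * real k * r)"
  have "r \<ge> 0" using x(1) by (auto intro: order_trans[OF zero_le_dist])
  moreover have "1 \<le> 4 * real k" using k by simp
  ultimately have "r \<le> 4 * real k * r" using mult_right_mono[of 1 "4 * real k" r] by simp
  then have xC: "x \<in> C" using x(1) unfolding C_def by simp
  have maps: "\<forall>u\<in>C. \<rho> i (\<phi> u) \<in> \<phi> ` V" if "i \<in> {0..n}" for i
    using a b that unfolding chart_near_homothety_def C_def by (cases "i = 0") auto
  have a_fixed: "\<rho> 0 (\<phi> x) = \<phi> x"
    using chart_fixed_imp_fixed[where f="\<rho> 0", OF hom _ x(2)] maps xC by simp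
  fix i assume "i \<in> {0..n}"
  show "\<rho> i (\<phi> x) = \<phi> x"
  proof (cases "i = 0")
    case True
    then show ?thesis using a_fixed by simp
  next
    case False
    with \<open>i \<in> {0..n}\<close> have i: "i \<in> {1..n}" by auto
    define G where "G = \<psi> \<circ> \<rho> i \<circ> \<phi>"
    have G: "near_linear_on C id \<theta> G" and u0: "dist (G u0) u0 < r / 4"
      using b i by (auto simp: chart_near_homothety_def near_linear_on_def G_def C_def)
    have "4 \<le> real k ^ 2" using k power_mono[of 2 "real k" 2] by simp
    then have "1 / (4 * real k ^ 2) \<le> 1 / 16" using k by (intro divide_left_mono) auto
    then have "\<theta> \<le> 1 / 16" using \<theta>(2) by linarith
    have "norm (G x - x) \<le> norm (G x - G u0 - (x - u0)) + norm (G u0 - u0)"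
      using norm_triangle_ineq[of "G x - G u0 - (x - u0)" "G u0 - u0"] by simp
    also have "\<dots> \<le> \<theta> * norm (x - u0) + r / 4"
      using G xC u0 \<open>r \<ge> 0\<close> unfolding near_linear_on_def C_def by (auto simp: dist_norm intro!: add_mono)
    also have "\<theta> * norm (x - u0) \<le> 1 / 16 * r"
      using x(1) \<theta>(1) \<open>\<theta> \<le> 1 / 16\<close> by (intro mult_mono) (auto simp: dist_norm norm_minus_commute)
    finally have Gx: "norm (G x - x) \<le> r" using \<open>r \<ge> 0\<close> by simp
    have ball: "cball x (2 * real k * norm (G x - x)) \<subseteq> C"
    proof
      fix z assume "z \<in> cball x (2 * real k * norm (G x - x))"
      then have "dist u0 z \<le> r + 2 * real k * r"
        using dist_triangle[of u0 z x] x(1) mult_left_mono[OF Gx, of "2 * real k"] by simp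
      also have "\<dots> \<le> 4 * real k * r"
        using mult_right_mono[of 1 "2 * real k" r] k \<open>r \<ge> 0\<close> by (simp add: mult_ac)
      finally show "z \<in> C" by (simp add: C_def)
    qed
    have rel: "(\<psi> \<circ> \<rho> 0 \<circ> \<phi>) (G x) = (G ^^ k) x" if "\<forall>j\<le>k. (G ^^ j) x \<in> C"
      using chart_conjugate_power_relation[where C=C, OF hom Hom_topspace_relation[OF \<rho> i] _ _ a_fixed]
        maps[of i] i that CV
      by (simp add: G_def C_def)
    have F: "near_linear_on C (scaleR (1 / real k)) \<theta> (\<psi> \<circ> \<rho> 0 \<circ> \<phi>)"
      using a by (simp add: C_def chart_near_homothety_def)
    have "(\<psi> \<circ> \<rho> 0 \<circ> \<phi>) x = x" using x(2) by simp
    from fixed_point_of_power_relation[OF G F xC this ball rel k \<theta>]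
    have "G x = x" .
    then show ?thesis
      using chart_fixed_imp_fixed[where f="\<rho> i" and x=x, OF hom] maps[of i] xC i by (auto simp: G_def)
  qed
qed

lemma continuous_map_chart_fixed_point:
  fixes \<phi> :: "'d::euclidean_space \<Rightarrow> 'e::euclidean_space"
  assumes ch: "chart M \<phi> V" and hom: "homeomorphism V (\<phi> ` V) \<phi> \<psi>"
    and U: "openin (Hom_top TYPE('d) M n k) U" and B: "B \<subseteq> V" and q: "q < 1"
    and contr: "\<And>\<rho> x y. \<rho> \<in> U \<Longrightarrow> x \<in> B \<Longrightarrow> y \<in> B \<Longrightarrow>
                  dist (\<psi> (\<rho> 0 (\<phi> x))) (\<psi> (\<rho> 0 (\<phi> y))) \<le> q * dist x y"
    and xf: "\<And>\<rho>. \<rho> \<in> U \<Longrightarrow> xf \<rho> \<in> B \<and> \<rho> 0 (\<phi> (xf \<rho>)) \<in> \<phi> ` V \<and> \<psi> (\<rho> 0 (\<phi> (xf \<rho>))) = xf \<rho>"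
  shows "continuous_map (subtopology (Hom_top TYPE('d) M n k) U) (top_of_set M) (\<phi> \<circ> xf)"
proof -
  let ?X = "subtopology (Hom_top TYPE('d) M n k) U"
  have Utop: "U \<subseteq> topspace (Hom_top TYPE('d) M n k)" using U by (rule openin_subset)
  have \<phi>M: "\<phi> ` V \<subseteq> M" and opM: "openin (top_of_set M) (\<phi> ` V)" and \<phi>c: "continuous_on V \<phi>"
    using ch hom by (auto simp: chart_def homeomorphism_def)
  have \<psi>c: "continuous_on (\<phi> ` V) \<psi>" using hom by (simp add: homeomorphism_def)
  have crit: "\<exists>T. openin ?X T \<and> \<rho> \<in> T \<and> (\<forall>\<rho>'\<in>T. xf \<rho>' \<in> ball (xf \<rho>) e)"
    if "\<rho> \<in> topspace ?X" "e > 0" for \<rho> e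
  proof -
    have \<rho>: "\<rho> \<in> U" using that Utop by simp
    define x where "x = xf \<rho>"
    have x: "x \<in> B" "\<rho> 0 (\<phi> x) \<in> \<phi> ` V" "\<psi> (\<rho> 0 (\<phi> x)) = x" using xf[OF \<rho>] by (auto simp: x_def)
    obtain \<sigma> where "\<sigma> > 0" and \<sigma>: "\<forall>y\<in>M. dist y (\<rho> 0 (\<phi> x)) < \<sigma> \<longrightarrow> dist (\<psi> y) x < (1 - q) * e"
      using continuous_on_openin_near[OF \<psi>c opM x(2), of "(1 - q) * e"] q \<open>e > 0\<close> x(3) by auto
    define T where "T = Hom_C1_nbhd TYPE('d) M n k \<phi> {x} \<rho> \<sigma> \<inter> U"
    have "openin (Hom_top TYPE('d) M n k) (Hom_C1_nbhd TYPE('d) M n k \<phi> {x} \<rho> \<sigma>)"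
      using x(1) B \<open>\<sigma> > 0\<close> Utop \<rho> by (intro openin_Hom_C1_nbhd[OF _ ch]) auto
    then have "openin ?X T" unfolding openin_subtopology T_def by blast
    moreover have "\<rho> \<in> T" using Hom_C1_nbhd_self[OF subsetD[OF Utop \<rho>] \<open>\<sigma> > 0\<close>] \<rho> by (simp add: T_def)
    moreover have "xf \<rho>' \<in> ball x e" if "\<rho>' \<in> T" for \<rho>'
    proof -
      have \<rho>': "\<rho>' \<in> U" "\<rho>' \<in> Hom_C1_nbhd TYPE('d) M n k \<phi> {x} \<rho> \<sigma>" using that by (simp_all add: T_def)
      have x': "xf \<rho>' \<in> B" "\<psi> (\<rho>' 0 (\<phi> (xf \<rho>'))) = xf \<rho>'" using xf[OF \<rho>'(1)] by blast+
      have "\<rho>' 0 \<in> Diff TYPE('d) M" using Hom_topspace_Diff[OF subsetD[OF Utop \<rho>'(1)]] by simp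
      moreover have "\<phi> x \<in> M" using \<phi>M x(1) B by blast
      ultimately have "\<rho>' 0 (\<phi> x) \<in> M" by (rule Diff_maps_into)
      moreover have "dist (\<rho>' 0 (\<phi> x)) (\<rho> 0 (\<phi> x)) < \<sigma>"
        using \<rho>'(2) unfolding Hom_C1_nbhd_def C1_close_in_chart_def by simp
      ultimately have "dist (\<psi> (\<rho>' 0 (\<phi> x))) x < (1 - q) * e" using \<sigma> by blast
      moreover have "dist (xf \<rho>') (\<psi> (\<rho>' 0 (\<phi> x))) \<le> q * dist (xf \<rho>') x"
        using contr[OF \<rho>'(1) x'(1) x(1)] x'(2) by simp
      ultimately have "dist (xf \<rho>') x < q * dist (xf \<rho>') x + (1 - q) * e"
        using dist_triangle[of "xf \<rho>'" x "\<psi> (\<rho>' 0 (\<phi> x))"] by linarith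
      then have "(1 - q) * dist (xf \<rho>') x < (1 - q) * e" unfolding left_diff_distrib by linarith
      then have "dist (xf \<rho>') x < e" using q by simp
      then show ?thesis by (simp add: dist_commute)
    qed
    ultimately show ?thesis unfolding x_def by (intro exI[of _ T]) blast
  qed
  have "continuous_map ?X euclidean xf"
    unfolding Met_TC.continuous_map_to_metric[unfolded mtopology_is_euclidean mball_eq_ball]
    using crit by blast
  then have "continuous_map ?X (top_of_set B) xf"
    using xf Utop by (intro continuous_map_into_subtopology) auto
  moreover have "continuous_map (top_of_set B) (top_of_set M) \<phi>"
    using \<phi>c B \<phi>M by (intro continuous_map_into_subtopology) (auto intro: continuous_on_subset)
  ultimately show ?thesis by (rule continuous_map_compose)
qed

lemma chart_fixed_point_map:
  fixes \<phi> :: "'d::euclidean_space \<Rightarrow> 'e::euclidean_space"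
  assumes ch: "chart M \<phi> V" and hom: "homeomorphism V (\<phi> ` V) \<phi> \<psi>"
    and U: "openin (Hom_top TYPE('d) M n k) U" "\<rho>0 \<in> U" and fixed: "\<rho>0 0 (\<phi> u0) = \<phi> u0"
    and k: "k \<ge> 2" and "r > 0" and CV: "cball u0 (4 * real k * r) \<subseteq> V"
    and est: "\<And>\<rho> i. \<rho> \<in> U \<Longrightarrow> i \<in> {0..n} \<Longrightarrow>
       chart_near_homothety \<psi> \<phi> V (cball u0 (4 * real k * r)) (if i = 0 then 1 / real k else 1)
         (1 / (4 * real k ^ 2)) (\<rho> i) \<and> dist (\<psi> (\<rho> i (\<phi> u0))) u0 < r / 4"
  shows "\<exists>phat. continuous_map (subtopology (Hom_top TYPE('d) M n k) U) (top_of_set M) phat \<and>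
           phat \<rho>0 = \<phi> u0 \<and> (\<forall>\<rho>\<in>U. global_fixed_point n \<rho> (phat \<rho>))"
proof -
  define \<theta> where "\<theta> = 1 / (4 * real k ^ 2)"
  define B where "B = cball u0 r"
  have "r \<le> 4 * real k * r" using k \<open>r > 0\<close> mult_right_mono[of 1 "4 * real k" r] by simp
  then have BC: "B \<subseteq> cball u0 (4 * real k * r)" by (simp add: B_def subset_cball)
  have "4 \<le> real k ^ 2" using k power_mono[of 2 "real k" 2] by simp
  then have "\<theta> \<le> 1 / 16" using k unfolding \<theta>_def by (intro divide_left_mono) auto
  moreover have "1 / real k \<le> 1 / 2" using k by simp
  ultimately have q: "\<bar>1 / real k\<bar> + \<theta> \<le> 3 / 4" by simp
  have F: "near_linear_on B (scaleR (1 / real k)) \<theta> (\<psi> \<circ> \<rho> 0 \<circ> \<phi>)" if "\<rho> \<in> U" for \<rho>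
    using est[OF that, of 0] near_linear_on_subset[OF _ BC] by (auto simp: \<theta>_def chart_near_homothety_def)
  have unique: "\<exists>!x. x \<in> B \<and> (\<psi> \<circ> \<rho> 0 \<circ> \<phi>) x = x" if "\<rho> \<in> U" for \<rho>
    unfolding B_def using est[OF that, of 0] \<open>r > 0\<close>
    by (intro near_homothety_unique_fixed_point[OF F[OF that, unfolded B_def] q]) (auto simp: dist_norm)
  define xf where "xf \<rho> = (THE x. x \<in> B \<and> (\<psi> \<circ> \<rho> 0 \<circ> \<phi>) x = x)" for \<rho> :: "nat \<Rightarrow> 'e \<Rightarrow> 'e"
  have xf: "xf \<rho> \<in> B \<and> (\<psi> \<circ> \<rho> 0 \<circ> \<phi>) (xf \<rho>) = xf \<rho>" if "\<rho> \<in> U" for \<rho>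
    unfolding xf_def by (rule theI'[OF unique[OF that]])
  show ?thesis
  proof (intro exI[of _ "\<phi> \<circ> xf"] conjI ballI)
    show "continuous_map (subtopology (Hom_top TYPE('d) M n k) U) (top_of_set M) (\<phi> \<circ> xf)"
    proof (rule continuous_map_chart_fixed_point[OF ch hom U(1) _ _ _ ])
      show "B \<subseteq> V" using BC CV by blast
      show "3 / 4 < (1::real)" by simp
      show "dist (\<psi> (\<rho> 0 (\<phi> x))) (\<psi> (\<rho> 0 (\<phi> y))) \<le> 3 / 4 * dist x y" if "\<rho> \<in> U" "x \<in> B" "y \<in> B" for \<rho> x y
        using order_trans[OF near_linear_on_homothety_lipschitz[OF F[OF that(1)] that(2,3)]
            mult_right_mono[OF q norm_ge_zero]]
        by (simp add: dist_norm)
      show "xf \<rho> \<in> B \<and> \<rho> 0 (\<phi> (xf \<rho>)) \<in> \<phi> ` V \<and> \<psi> (\<rho> 0 (\<phi> (xf \<rho>))) = xf \<rho>" if "\<rho> \<in> U" for \<rho>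
        using xf[OF that] est[OF that, of 0] BC by (auto simp: chart_near_homothety_def)
    qed
    have "u0 \<in> V" using CV \<open>r > 0\<close> k by (auto intro: subsetD[OF CV])
    then have "(\<psi> \<circ> \<rho>0 0 \<circ> \<phi>) u0 = u0" using fixed homeomorphism_apply1[OF hom] by simp
    then have "xf \<rho>0 = u0"
      unfolding xf_def using \<open>r > 0\<close> by (intro the1_equality[OF unique[OF U(2)]]) (simp add: B_def)
    then show "(\<phi> \<circ> xf) \<rho>0 = \<phi> u0" by simp
    fix \<rho> assume \<rho>: "\<rho> \<in> U"
    have a: "chart_near_homothety \<psi> \<phi> V (cball u0 (4 * real k * r)) (1 / real k) \<theta> (\<rho> 0)"
      using est[OF \<rho>, of 0] by (simp add: \<theta>_def)
    have b: "\<forall>i\<in>{1..n}. chart_near_homothety \<psi> \<phi> V (cball u0 (4 * real k * r)) 1 \<theta> (\<rho> i) \<and>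
                dist (\<psi> (\<rho> i (\<phi> u0))) u0 < r / 4"
    proof
      fix i assume "i \<in> {1..n}"
      then show "chart_near_homothety \<psi> \<phi> V (cball u0 (4 * real k * r)) 1 \<theta> (\<rho> i) \<and>
                dist (\<psi> (\<rho> i (\<phi> u0))) u0 < r / 4"
        using est[OF \<rho>, of i] by (simp add: \<theta>_def)
    qed
    have "\<theta> \<ge> 0" by (simp add: \<theta>_def)
    moreover have "xf \<rho> \<in> cball u0 r" "\<psi> (\<rho> 0 (\<phi> (xf \<rho>))) = xf \<rho>" using xf[OF \<rho>] by (simp_all add: B_def)
    ultimately show "global_fixed_point n \<rho> ((\<phi> \<circ> xf) \<rho>)"
      using chart_global_fixed_point[OF hom subsetD[OF openin_subset[OF U(1)] \<rho>] k CV a b] by (simp add: \<theta>_def)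
  qed
qed

lemma chart_local_fixed_point_map:
  fixes \<phi> :: "'d::euclidean_space \<Rightarrow> 'e::euclidean_space"
  assumes ch: "chart M \<phi> V" and hom: "homeomorphism V (\<phi> ` V) \<phi> \<psi>" and u0: "u0 \<in> V"
    and \<rho>0: "\<rho>0 \<in> topspace (Hom_top TYPE('d) M n k)" and k: "k \<ge> 2"
    and fixed: "\<And>i. i \<in> {0..n} \<Longrightarrow> \<rho>0 i (\<phi> u0) = \<phi> u0"
    and dsc: "\<And>i. i \<in> {0..n} \<Longrightarrow>
                deriv_scalar_at TYPE('d) M (\<rho>0 i) (\<phi> u0) (if i = 0 then 1 / real k else 1)"
  shows "\<exists>U. openin (Hom_top TYPE('d) M n k) U \<and> \<rho>0 \<in> U \<and>
           (\<exists>phat. continuous_map (subtopology (Hom_top TYPE('d) M n k) U) (top_of_set M) phat \<and>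
                   phat \<rho>0 = \<phi> u0 \<and> (\<forall>\<rho>\<in>U. global_fixed_point n \<rho> (phat \<rho>)))"
proof -
  define \<theta> where "\<theta> = 1 / (4 * real k ^ 2)"
  have "1 \<le> real k ^ 2" using k by (intro one_le_power) simp
  then have "1 \<le> 4 * real k ^ 2" by linarith
  moreover have "0 < real k" using k by simp
  ultimately have \<theta>: "0 < \<theta>" "\<theta> \<le> 2" unfolding \<theta>_def by (simp_all add: divide_le_eq)
  have "\<bar>if i = 0 then 1 / real k else 1\<bar> \<le> 1" for i :: nat using k by simp
  then obtain R where R: "R > 0" "cball u0 R \<subseteq> V" and est: "\<And>s. s > 0 \<Longrightarrow> \<exists>\<delta>>0.
      \<forall>\<rho>\<in>Hom_C1_nbhd TYPE('d) M n k \<phi> (cball u0 R) \<rho>0 \<delta>. \<forall>i\<in>{0..n}.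
        chart_near_homothety \<psi> \<phi> V (cball u0 R) (if i = 0 then 1 / real k else 1) \<theta> (\<rho> i) \<and>
        dist (\<psi> (\<rho> i (\<phi> u0))) u0 < s"
    using Hom_chart_estimates[OF ch hom u0 \<rho>0 fixed dsc _ \<theta>] by metis
  define r where "r = R / (4 * real k)"
  have r: "r > 0" "4 * real k * r = R" using R(1) k by (auto simp: r_def)
  obtain \<delta> where "\<delta> > 0" and \<delta>: "\<forall>\<rho>\<in>Hom_C1_nbhd TYPE('d) M n k \<phi> (cball u0 R) \<rho>0 \<delta>. \<forall>i\<in>{0..n}.
        chart_near_homothety \<psi> \<phi> V (cball u0 R) (if i = 0 then 1 / real k else 1) \<theta> (\<rho> i) \<and>
        dist (\<psi> (\<rho> i (\<phi> u0))) u0 < r / 4"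
    using est[of "r / 4"] r(1) by auto
  define U where "U = Hom_C1_nbhd TYPE('d) M n k \<phi> (cball u0 R) \<rho>0 \<delta>"
  have U: "openin (Hom_top TYPE('d) M n k) U" "\<rho>0 \<in> U"
    using openin_Hom_C1_nbhd[OF \<rho>0 ch compact_cball R(2) \<open>\<delta> > 0\<close>]
      Hom_C1_nbhd_self[OF \<rho>0 \<open>\<delta> > 0\<close>] by (simp_all add: U_def)
  then show ?thesis
    using chart_fixed_point_map[OF ch hom U fixed[of 0] k r(1)] R(2) \<delta>
    by (auto simp: U_def r(2) \<theta>_def)
qed

theorem lemma2p10:
  fixes M :: "'e::euclidean_space set" and n k :: nat
    and \<rho>0 :: "nat \<Rightarrow> ('e \<Rightarrow> 'e)" and p0 :: 'e
  assumes "n \<ge> 2" and "k \<ge> 2"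
    and "closed_manifold TYPE('d::euclidean_space) M"
    and "\<rho>0 \<in> topspace (Hom_top TYPE('d) M n k)"
    and "p0 \<in> M" and "global_fixed_point n \<rho>0 p0"
    and "deriv_scalar_at TYPE('d) M (\<rho>0 0) p0 (1 / real k)"
    and "\<forall>i\<in>{1..n}. deriv_scalar_at TYPE('d) M (\<rho>0 i) p0 1"
  shows "\<exists>U. openin (Hom_top TYPE('d) M n k) U \<and> \<rho>0 \<in> U \<and>
           (\<exists>phat. continuous_map (subtopology (Hom_top TYPE('d) M n k) U) (top_of_set M) phat \<and>
                   phat \<rho>0 = p0 \<and> (\<forall>\<rho>\<in>U. global_fixed_point n \<rho> (phat \<rho>)))"
proof -
  obtain \<phi> :: "'d \<Rightarrow> 'e" and V where ch: "chart M \<phi> V" and "p0 \<in> \<phi> ` V"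
    using assms(3,5) unfolding closed_manifold_def submanifold_def by blast
  then obtain u0 where u0: "u0 \<in> V" "\<phi> u0 = p0" by blast
  obtain \<psi> where hom: "homeomorphism V (\<phi> ` V) \<phi> \<psi>" using ch unfolding chart_def by blast
  have "\<rho>0 i (\<phi> u0) = \<phi> u0" if "i \<in> {0..n}" for i
    using assms(6) that u0(2) by (simp add: global_fixed_point_def)
  moreover have "deriv_scalar_at TYPE('d) M (\<rho>0 i) (\<phi> u0) (if i = 0 then 1 / real k else 1)"
    if "i \<in> {0..n}" for i
    using assms(7,8) that u0(2) by (cases "i = 0") auto
  ultimately show ?thesis
    using chart_local_fixed_point_map[OF ch hom u0(1) assms(4,2)] u0(2) by simp
qed

end
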